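(* For every infinite binary sequence $b\in\{0,1\}^{\mathbb N}$, the set $F_b=\{v\in\mathscr C : \rho(v)=b\}$ satisfies $$F_b=\{\langle a\rangle \sigma(b) : a\in\mathbb N^{\mathbb N}\}.$$ Consequently $F_b$ is uncountable, $\sigma(b)$ is the unique element of $F_b$ containing no two consecutive $0$'s, and $\sigma(b)$ is the maximum of $F_b$ with respect to the lexicographic order.
   Context: Binary words are finite or infinite sequences over $\{0,1\}$. Define $\rho$ on binary words: for $b=b_1b_2\dots$, $\rho(b)$ is obtained by deleting every digit $b_n=0$ and replacing every $b_n=1$ by $0$ if $n$ is odd and by $1$ if $n$ is even. Let $\mathscr C$ be the set of infinite binary sequences containing infinitely many $1$'s. Define $\sigma$ on a binary sequence $b=b_1b_2\dots$ as the concatenation $\sigma(b)=s_1s_2\dots$ where $s_1=1$ if $b_1=0$ and $s_1=01$ if $b_1=1$, and for $n\ge2$, $s_n=1$ if $b_n\ne b_{n-1}$ and $s_n=01$ if $b_n=b_{n-1}$. For $a=(a_1,a_2,\dots)\in\mathbb N^{\mathbb N}$ (with $\mathbb N$ including $0$) and $c\in\mathscr C$, $\langle a\rangle c$ denotes the sequence obtained from $c$ by inserting the block $0^{2a_k}$ immediately before the $k$-th occurrence of $1$ in $c$, for every $k\ge1$. *)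

theory Defs
  imports Main "HOL-Library.Infinite_Set" "HOL-Library.Countable_Set"
begin

text \<open>Infinite binary sequences are functions nat => bool (True = 1, False = 0),
  indexed from 0 (position i here is position i+1 in the paper).\<close>

definition C_set :: "(nat \<Rightarrow> bool) set" where
  "C_set = {v. infinite {i. v i}}"

definition onepos :: "(nat \<Rightarrow> bool) \<Rightarrow> nat \<Rightarrow> nat" where
  "onepos v k = enumerate {i. v i} k"

text \<open>rho on sequences of C: the (k+1)-th 1 becomes 1 iff its 1-indexed position
  is even, i.e. iff its 0-indexed position is odd; zeros are deleted.\<close>
definition rho :: "(nat \<Rightarrow> bool) \<Rightarrow> nat \<Rightarrow> bool" where
  "rho v k = odd (onepos v k)"

definition blk_start :: "(nat \<Rightarrow> bool list) \<Rightarrow> nat \<Rightarrow> nat" where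
  "blk_start s n = (\<Sum>i<n. length (s i))"

definition sconcat :: "(nat \<Rightarrow> bool list) \<Rightarrow> nat \<Rightarrow> bool" where
  "sconcat s j = (let n = (LEAST n. j < blk_start s (Suc n)) in s n ! (j - blk_start s n))"

definition sigma_blk :: "(nat \<Rightarrow> bool) \<Rightarrow> nat \<Rightarrow> bool list" where
  "sigma_blk b n =
     (if n = 0 then (if b 0 then [False, True] else [True])
      else (if b n = b (n - 1) then [False, True] else [True]))"

definition sigma :: "(nat \<Rightarrow> bool) \<Rightarrow> nat \<Rightarrow> bool" where
  "sigma b = sconcat (sigma_blk b)"

text \<open>For c in C, c is the concatenation of blocks 0^m 1; block k ends at the (k+1)-th 1.\<close>
definition c_blk :: "(nat \<Rightarrow> bool) \<Rightarrow> nat \<Rightarrow> bool list" where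
  "c_blk c k = map c [(if k = 0 then 0 else Suc (onepos c (k - 1))) ..< Suc (onepos c k)]"

definition insert_zeros :: "(nat \<Rightarrow> nat) \<Rightarrow> (nat \<Rightarrow> bool) \<Rightarrow> nat \<Rightarrow> bool" where
  "insert_zeros a c = sconcat (\<lambda>k. replicate (2 * a k) False @ c_blk c k)"

definition lex_less :: "(nat \<Rightarrow> bool) \<Rightarrow> (nat \<Rightarrow> bool) \<Rightarrow> bool" where
  "lex_less v w = (\<exists>n. (\<forall>i<n. v i = w i) \<and> \<not> v n \<and> w n)"

definition no_two_zeros :: "(nat \<Rightarrow> bool) \<Rightarrow> bool" where
  "no_two_zeros v = (\<forall>i. v i \<or> v (Suc i))"

end

theory Submission
  imports Defs
begin

text \<open>Every \<open>v \<in> C\<close> is determined by its gap sequence \<open>m\<close>, where \<open>m k\<close> counts the zeros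
  immediately before the \<open>k\<close>-th one of \<open>v\<close>; that one sits at position
  \<open>(\<Sum>i\<le>k. m i + 1) - 1\<close> (counting from \<open>0\<close>), so \<open>\<rho> v = b\<close> prescribes exactly the parity of
  every gap, namely \<open>m k \<equiv> [b k = b (k - 1)]\<close> (mod 2) with \<open>b (-1) = 0\<close>.
  The word \<open>\<sigma> b\<close> is the sequence whose gaps are these residues \<open>0\<close> or \<open>1\<close>, and
  inserting \<open>2 a k\<close> zeros before the \<open>k\<close>-th one adds \<open>2 a k\<close> to the \<open>k\<close>-th gap, which
  yields all sequences with the prescribed parities. Having no two consecutive zeros means all gaps are at most \<open>1\<close>, and enlarging
  the first gap in which a sequence differs from \<open>\<sigma> b\<close> replaces a one of \<open>\<sigma> b\<close> by a zero.\<close>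

lemma enumerate_range_strict_mono:
  fixes p :: "nat \<Rightarrow> nat"
  assumes "strict_mono p"
  shows "enumerate (range p) n = p n"
proof (induction n)
  case 0
  show ?case unfolding enumerate_0
    by (rule Least_equality) (auto simp: strict_mono_less_eq assms)
next
  case (Suc n)
  have inf: "infinite (range p)"
    using assms by (simp add: range_inj_infinite strict_mono_imp_inj_on)
  show ?case unfolding enumerate_Suc''[OF inf] Suc.IH
    by (rule Least_equality) (auto simp: assms strict_mono_less strict_mono_less_eq Suc_le_eq)
qed

lemma uncountable_UNIV_nat_fun: "uncountable (UNIV :: (nat \<Rightarrow> nat) set)"
proof
  assume "countable (UNIV :: (nat \<Rightarrow> nat) set)"
  then obtain h :: "nat \<Rightarrow> nat \<Rightarrow> nat" where "range h = UNIV"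
    using uncountable_def by blast
  then obtain k where "h k = (\<lambda>n. Suc (h n n))"
    by (metis UNIV_I imageE)
  then have "h k k = Suc (h k k)"
    by metis
  then show False
    by simp
qed

definition gap_block :: "(nat \<Rightarrow> nat) \<Rightarrow> nat \<Rightarrow> bool list" where
  "gap_block m k = replicate (m k) False @ [True]"

fun gap_pos :: "(nat \<Rightarrow> nat) \<Rightarrow> nat \<Rightarrow> nat" where
  "gap_pos m 0 = m 0"
| "gap_pos m (Suc k) = gap_pos m k + Suc (m (Suc k))"

lemma strict_mono_gap_pos: "strict_mono (gap_pos m)"
  by (simp add: strict_mono_Suc_iff)

lemma le_gap_pos: "k \<le> gap_pos m k"
  by (induction k) auto

lemma inj_gap_pos: "inj (gap_pos :: (nat \<Rightarrow> nat) \<Rightarrow> nat \<Rightarrow> nat)"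
proof
  fix m m' :: "nat \<Rightarrow> nat"
  assume eq: "gap_pos m = gap_pos m'"
  show "m = m'"
  proof
    fix k show "m k = m' k"
      using fun_cong[OF eq, of k] fun_cong[OF eq, of "k - 1"] by (cases k) auto
  qed
qed

lemma blk_start_gap_block_0 [simp]: "blk_start (gap_block m) 0 = 0"
  by (simp add: blk_start_def)

lemma blk_start_gap_block_Suc [simp]: "blk_start (gap_block m) (Suc k) = Suc (gap_pos m k)"
  by (induction k) (auto simp: blk_start_def gap_block_def)

lemma gap_pos_eq_blk_start: "gap_pos m k = blk_start (gap_block m) k + m k"
  by (cases k) auto

lemma not_in_range_gap_pos:
  assumes "blk_start (gap_block m) k \<le> i" "i < gap_pos m k"
  shows "i \<notin> range (gap_pos m)"
proof
  assume "i \<in> range (gap_pos m)"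
  then obtain j where j: "i = gap_pos m j" by auto
  show False
  proof (cases "j < k")
    case True
    then have "gap_pos m j \<le> gap_pos m (k - 1)"
      by (simp add: strict_mono_less_eq strict_mono_gap_pos)
    with assms(1) True j show False by (cases k) auto
  next
    case False
    then have "gap_pos m k \<le> gap_pos m j"
      by (simp add: strict_mono_less_eq strict_mono_gap_pos)
    with assms(2) j show False by simp
  qed
qed

lemma in_range_gap_pos_below:
  assumes "i < blk_start (gap_block m) k"
  shows "i \<in> range (gap_pos m) \<longleftrightarrow> (\<exists>j<k. i = gap_pos m j)"
proof
  assume "i \<in> range (gap_pos m)"
  then obtain j where j: "i = gap_pos m j" by auto
  have "j < k"
  proof (rule ccontr)
    assume "\<not> j < k"
    then have "gap_pos m k \<le> gap_pos m j"
      by (simp add: strict_mono_less_eq strict_mono_gap_pos)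
    with assms j gap_pos_eq_blk_start[of m k] show False by simp
  qed
  with j show "\<exists>j<k. i = gap_pos m j" by blast
qed auto

lemma sconcat_gap_block: "sconcat (gap_block m) = (\<lambda>j. j \<in> range (gap_pos m))"
proof
  fix j
  define N where "N = (LEAST n. j < blk_start (gap_block m) (Suc n))"
  have "j < blk_start (gap_block m) (Suc j)"
    using le_gap_pos[of j m] by simp
  then have upper: "j \<le> gap_pos m N"
    unfolding N_def by (metis (mono_tags, lifting) LeastI blk_start_gap_block_Suc less_Suc_eq_le)
  have lower: "blk_start (gap_block m) N \<le> j"
  proof (cases N)
    case (Suc n)
    then have "\<not> j < blk_start (gap_block m) (Suc n)"
      unfolding N_def by (metis lessI not_less_Least)
    then show ?thesis using Suc by simp
  qed simp
  have "sconcat (gap_block m) j = (gap_block m N ! (j - blk_start (gap_block m) N))"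
    unfolding sconcat_def N_def[symmetric] by simp
  also have "\<dots> = (j = gap_pos m N)"
    using upper lower gap_pos_eq_blk_start[of m N] by (auto simp: gap_block_def nth_append)
  also have "\<dots> = (j \<in> range (gap_pos m))"
    using not_in_range_gap_pos[OF lower] upper by (auto simp: le_less)
  finally show "sconcat (gap_block m) j = (j \<in> range (gap_pos m))" .
qed

lemma sconcat_gap_block_in_C_set: "sconcat (gap_block m) \<in> C_set"
  by (simp add: C_set_def sconcat_gap_block range_inj_infinite strict_mono_imp_inj_on
      strict_mono_gap_pos)

lemma onepos_sconcat_gap_block: "onepos (sconcat (gap_block m)) = gap_pos m"
  by (rule ext) (simp add: onepos_def sconcat_gap_block enumerate_range_strict_mono strict_mono_gap_pos)

lemma rho_sconcat_gap_block: "rho (sconcat (gap_block m)) = (\<lambda>k. odd (gap_pos m k))"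
  by (rule ext) (simp add: rho_def onepos_sconcat_gap_block)

lemma c_blk_sconcat_gap_block: "c_blk (sconcat (gap_block m)) k = gap_block m k"
proof -
  let ?v = "sconcat (gap_block m)" and ?lo = "blk_start (gap_block m) k"
  have lo: "c_blk ?v k = map ?v [?lo..<Suc (gap_pos m k)]"
    by (cases k) (simp_all add: c_blk_def onepos_sconcat_gap_block)
  have "map ?v [?lo..<gap_pos m k] = replicate (m k) False"
  proof (rule replicate_eqI)
    fix y assume "y \<in> set (map ?v [?lo..<gap_pos m k])"
    then show "y = False"
      using not_in_range_gap_pos[of m k] by (auto simp: sconcat_gap_block)
  qed (simp add: gap_pos_eq_blk_start)
  moreover have "?lo \<le> gap_pos m k"
    by (simp add: gap_pos_eq_blk_start)
  ultimately show ?thesis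
    unfolding lo by (simp add: gap_block_def sconcat_gap_block)
qed

lemma C_set_imp_sconcat_gap_block:
  assumes "v \<in> C_set"
  obtains m where "v = sconcat (gap_block m)"
proof -
  let ?p = "onepos v"
  have inf: "infinite {i. v i}" using assms by (simp add: C_set_def)
  have mono: "strict_mono ?p"
    unfolding onepos_def using strict_mono_enumerate[OF inf] .
  define m where "m k = (if k = 0 then ?p 0 else ?p k - Suc (?p (k - 1)))" for k
  have "gap_pos m k = ?p k" for k
  proof (induction k)
    case (Suc k)
    have "?p k < ?p (Suc k)" using mono by (simp add: strict_mono_less)
    with Suc show ?case by (simp add: m_def)
  qed (simp add: m_def)
  then have "range (gap_pos m) = {i. v i}"
    using range_enumerate[OF inf] unfolding onepos_def by presburger
  then have "v = sconcat (gap_block m)"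
    unfolding sconcat_gap_block by auto
  then show thesis by (rule that)
qed

lemma no_two_zeros_sconcat_gap_block_iff:
  "no_two_zeros (sconcat (gap_block m)) \<longleftrightarrow> (\<forall>k. m k \<le> 1)"
proof
  assume no2: "no_two_zeros (sconcat (gap_block m))"
  show "\<forall>k. m k \<le> 1"
  proof (rule ccontr)
    assume "\<not> (\<forall>k. m k \<le> 1)"
    then obtain k where "\<not> m k \<le> 1" by blast
    define i where "i = gap_pos m k - 2"
    have start: "blk_start (gap_block m) k \<le> i" and lt: "Suc i < gap_pos m k"
      using gap_pos_eq_blk_start[of m k] \<open>\<not> m k \<le> 1\<close> by (simp_all add: i_def)
    have "i \<notin> range (gap_pos m)"
      using start lt by (intro not_in_range_gap_pos[of m k]) linarith+
    moreover have "Suc i \<notin> range (gap_pos m)"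
      using start lt by (intro not_in_range_gap_pos[of m k]) linarith+
    ultimately show False using no2
      unfolding no_two_zeros_def sconcat_gap_block by blast
  qed
next
  assume small: "\<forall>k. m k \<le> 1"
  show "no_two_zeros (sconcat (gap_block m))"
    unfolding no_two_zeros_def sconcat_gap_block
  proof
    fix i
    define N where "N = (LEAST n. i \<le> gap_pos m n)"
    have "i \<le> gap_pos m N"
      unfolding N_def by (rule LeastI[of _ i]) (rule le_gap_pos)
    moreover have "gap_pos m N \<le> Suc i"
    proof (cases N)
      case (Suc n)
      then have "\<not> i \<le> gap_pos m n"
        unfolding N_def by (metis lessI not_less_Least)
      with Suc small[rule_format, of N] show ?thesis by simp
    qed (use small[rule_format, of 0] in simp)
    ultimately show "i \<in> range (gap_pos m) \<or> Suc i \<in> range (gap_pos m)"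
      by (metis le_SucE le_antisym rangeI)
  qed
qed

lemma lex_less_sconcat_gap_block:
  assumes le: "\<And>k. m' k \<le> m k" and ne: "m \<noteq> m'"
  shows "lex_less (sconcat (gap_block m)) (sconcat (gap_block m'))"
proof -
  define k where "k = (LEAST k. m k \<noteq> m' k)"
  have "\<exists>k. m k \<noteq> m' k" using ne by auto
  then have "m k \<noteq> m' k" unfolding k_def by (rule LeastI_ex)
  with le[of k] have gap_lt: "m' k < m k" by linarith
  have "m j = m' j" if "j < k" for j
    using that not_less_Least unfolding k_def by blast
  then have pos_eq: "gap_pos m j = gap_pos m' j" if "j < k" for j
    using that by (induction j) auto
  then have start_eq: "blk_start (gap_block m) k = blk_start (gap_block m') k"
    by (cases k) auto
  define n where "n = gap_pos m' k"
  have n_lt: "n < gap_pos m k"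
    using gap_lt gap_pos_eq_blk_start[of m k] gap_pos_eq_blk_start[of m' k] start_eq
    by (simp add: n_def)
  have n_ge: "blk_start (gap_block m) k \<le> n"
    using gap_pos_eq_blk_start[of m' k] start_eq by (simp add: n_def)
  show ?thesis unfolding lex_less_def
  proof (intro exI conjI allI impI)
    show "\<not> sconcat (gap_block m) n"
      using not_in_range_gap_pos[OF n_ge n_lt] by (simp add: sconcat_gap_block)
    show "sconcat (gap_block m') n" by (simp add: sconcat_gap_block n_def)
    fix i assume "i < n"
    show "sconcat (gap_block m) i = sconcat (gap_block m') i"
    proof (cases "i < blk_start (gap_block m) k")
      case True
      have "(\<exists>j<k. i = gap_pos m j) \<longleftrightarrow> (\<exists>j<k. i = gap_pos m' j)"
        using pos_eq by auto
      then show ?thesis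
        using in_range_gap_pos_below[OF True] in_range_gap_pos_below[of i m' k] True start_eq
        by (simp add: sconcat_gap_block)
    next
      case False
      then show ?thesis
        using not_in_range_gap_pos[of m k i] not_in_range_gap_pos[of m' k i] \<open>i < n\<close> n_lt
          start_eq by (simp add: sconcat_gap_block n_def)
    qed
  qed
qed

definition sigma_gap :: "(nat \<Rightarrow> bool) \<Rightarrow> nat \<Rightarrow> nat" where
  "sigma_gap b k = of_bool (if k = 0 then b 0 else b k = b (k - 1))"

lemma sigma_gap_le_1: "sigma_gap b k \<le> 1"
  by (simp add: sigma_gap_def)

lemma sigma_eq_sconcat_gap_block: "sigma b = sconcat (gap_block (sigma_gap b))"
  unfolding sigma_def by (rule arg_cong[where f = sconcat]) (auto simp: sigma_blk_def
      gap_block_def sigma_gap_def)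

lemma insert_zeros_sigma:
  "insert_zeros a (sigma b) = sconcat (gap_block (\<lambda>k. 2 * a k + sigma_gap b k))"
  unfolding insert_zeros_def sigma_eq_sconcat_gap_block c_blk_sconcat_gap_block
  by (rule arg_cong[where f = sconcat]) (auto simp: gap_block_def replicate_add)

lemma odd_gap_pos_iff:
  "(\<lambda>k. odd (gap_pos m k)) = b \<longleftrightarrow> (\<exists>a. m = (\<lambda>k. 2 * a k + sigma_gap b k))"
proof
  assume "(\<lambda>k. odd (gap_pos m k)) = b"
  then have par: "odd (gap_pos m k) = b k" for k by auto
  have "m k mod 2 = sigma_gap b k" for k
    using par[of k] par[of "k - 1"]
    by (cases k) (auto simp: sigma_gap_def odd_iff_mod_2_eq_one)
  then have m_eq: "m = (\<lambda>k. 2 * (m k div 2) + sigma_gap b k)"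
    by (metis div_mult_mod_eq mult.commute)
  show "\<exists>a. m = (\<lambda>k. 2 * a k + sigma_gap b k)"
    by (rule exI[of _ "\<lambda>k. m k div 2"]) (rule m_eq)
next
  assume "\<exists>a. m = (\<lambda>k. 2 * a k + sigma_gap b k)"
  then obtain a where "m = (\<lambda>k. 2 * a k + sigma_gap b k)" by blast
  moreover have "odd (gap_pos (\<lambda>k. 2 * a k + sigma_gap b k) k) = b k" for k
    by (induction k) (auto simp: sigma_gap_def)
  ultimately show "(\<lambda>k. odd (gap_pos m k)) = b" by auto
qed

lemma rho_fiber_eq: "{v \<in> C_set. rho v = b} = range (\<lambda>a. insert_zeros a (sigma b))"
proof (intro set_eqI iffI)
  fix v assume "v \<in> {v \<in> C_set. rho v = b}"
  then obtain m where v: "v = sconcat (gap_block m)" and "rho v = b"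
    using C_set_imp_sconcat_gap_block by blast
  then obtain a where "m = (\<lambda>k. 2 * a k + sigma_gap b k)"
    using odd_gap_pos_iff[of m b] by (auto simp: rho_sconcat_gap_block)
  then show "v \<in> range (\<lambda>a. insert_zeros a (sigma b))"
    by (simp add: v insert_zeros_sigma)
next
  fix v assume "v \<in> range (\<lambda>a. insert_zeros a (sigma b))"
  then show "v \<in> {v \<in> C_set. rho v = b}"
    using odd_gap_pos_iff
    by (auto simp: insert_zeros_sigma sconcat_gap_block_in_C_set rho_sconcat_gap_block)
qed

lemma insert_zeros_zero_sigma: "insert_zeros (\<lambda>_. 0) (sigma b) = sigma b"
  unfolding insert_zeros_sigma by (simp add: sigma_eq_sconcat_gap_block)

lemma inj_insert_zeros_sigma: "inj (\<lambda>a. insert_zeros a (sigma b))"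
proof
  fix a a' assume "insert_zeros a (sigma b) = insert_zeros a' (sigma b)"
  then have "gap_pos (\<lambda>k. 2 * a k + sigma_gap b k) = gap_pos (\<lambda>k. 2 * a' k + sigma_gap b k)"
    unfolding insert_zeros_sigma by (metis onepos_sconcat_gap_block)
  then have "(\<lambda>k. 2 * a k + sigma_gap b k) = (\<lambda>k. 2 * a' k + sigma_gap b k)"
    by (rule injD[OF inj_gap_pos])
  then show "a = a'" by (simp add: fun_eq_iff)
qed

lemma no_two_zeros_insert_zeros_sigma_iff:
  "no_two_zeros (insert_zeros a (sigma b)) \<longleftrightarrow> a = (\<lambda>_. 0)"
proof -
  have "2 * a k + sigma_gap b k \<le> 1 \<longleftrightarrow> a k = 0" for k
    using sigma_gap_le_1[of b k] by linarith
  then show ?thesis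
    by (simp add: insert_zeros_sigma no_two_zeros_sconcat_gap_block_iff fun_eq_iff)
qed

lemma lex_less_insert_zeros_sigma:
  assumes "a \<noteq> (\<lambda>_. 0)"
  shows "lex_less (insert_zeros a (sigma b)) (sigma b)"
proof -
  have "(\<lambda>k. 2 * a k + sigma_gap b k) \<noteq> sigma_gap b"
    using assms by (simp add: fun_eq_iff)
  then show ?thesis
    unfolding insert_zeros_sigma
    by (subst sigma_eq_sconcat_gap_block) (intro lex_less_sconcat_gap_block; simp)
qed

theorem proposition2p2:
  fixes b :: "nat \<Rightarrow> bool"
  defines "F \<equiv> {v \<in> C_set. rho v = b}"
  shows "F = {insert_zeros a (sigma b) | a. True}
    \<and> uncountable F
    \<and> sigma b \<in> F \<and> no_two_zeros (sigma b)
    \<and> (\<forall>v\<in>F. no_two_zeros v \<longrightarrow> v = sigma b)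
    \<and> (\<forall>v\<in>F. v \<noteq> sigma b \<longrightarrow> lex_less v (sigma b))"
proof -
  have F: "F = range (\<lambda>a. insert_zeros a (sigma b))"
    unfolding F_def by (rule rho_fiber_eq)
  have "uncountable F"
    unfolding F using countable_image_inj_on[OF _ inj_insert_zeros_sigma] uncountable_UNIV_nat_fun
    by blast
  moreover have "sigma b \<in> F"
    unfolding F using rangeI[of "\<lambda>a. insert_zeros a (sigma b)" "\<lambda>_. 0"]
    by (simp only: insert_zeros_zero_sigma)
  moreover have "no_two_zeros (sigma b)"
    using no_two_zeros_insert_zeros_sigma_iff[of "\<lambda>_. 0" b] by (simp add: insert_zeros_zero_sigma)
  moreover have "\<forall>v\<in>F. no_two_zeros v \<longrightarrow> v = sigma b"
    unfolding F by (auto simp: no_two_zeros_insert_zeros_sigma_iff insert_zeros_zero_sigma)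
  moreover have "\<forall>v\<in>F. v \<noteq> sigma b \<longrightarrow> lex_less v (sigma b)"
  proof
    fix v assume "v \<in> F"
    then obtain a where v: "v = insert_zeros a (sigma b)" unfolding F by blast
    show "v \<noteq> sigma b \<longrightarrow> lex_less v (sigma b)"
      using lex_less_insert_zeros_sigma[of a b] insert_zeros_zero_sigma[of b] v by auto
  qed
  moreover have "F = {insert_zeros a (sigma b) | a. True}"
    unfolding F by blast
  ultimately show ?thesis by blast
qed

end
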